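(* Let $n=2p+1$ with $p\ge1$ an integer and let $1\le k\le p$. If $g$ is a smooth function defined on a neighbourhood of the origin in $\mathbb{R}^n$ which is spherically symmetric (i.e. $g(\vec x)=g(r)$ depends only on $r=|\vec x|$) and satisfies $(I-\Delta)^kg=0$, where $\Delta$ is the Laplacian on $\mathbb{R}^n$, then there are constants $c_{p-k+1},\dots,c_p$ such that \[g(r)=\sum_{i=p-k+1}^pc_i\tau_i(r).\]
   Context: The functions $\tau_i$ are defined by $\tau_0=\cosh$ and $\tau_{i+1}(r)=-\frac1r\tau_i'(r)$ for $r\ne0$, extended to even real-analytic functions on $\mathbb{R}$; $\tau_i(r)$ is regarded as the spherically symmetric function $\vec x\mapsto\tau_i(|\vec x|)$ on $\mathbb{R}^n$. *)

theory Defs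
  imports "HOL-Analysis.Analysis"
begin

fun tau :: "nat \<Rightarrow> real \<Rightarrow> real" where
  "tau 0 r = cosh r"
| "tau (Suc i) r =
     (if r = 0 then Lim (at 0) (\<lambda>s. - deriv (tau i) s / s)
      else - deriv (tau i) r / r)"

definition partial :: "'n::finite \<Rightarrow> (real^'n \<Rightarrow> real) \<Rightarrow> real^'n \<Rightarrow> real" where
  "partial j f x = deriv (\<lambda>t. f (x + t *\<^sub>R axis j 1)) 0"

definition laplacian :: "(real^'n::finite \<Rightarrow> real) \<Rightarrow> real^'n \<Rightarrow> real" where
  "laplacian f x = (\<Sum>j\<in>UNIV. partial j (partial j f) x)"

definition id_minus_lap :: "(real^'n::finite \<Rightarrow> real) \<Rightarrow> real^'n \<Rightarrow> real" where
  "id_minus_lap f x = f x - laplacian f x"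

fun Ck_on :: "nat \<Rightarrow> (real^'n::finite) set \<Rightarrow> (real^'n \<Rightarrow> real) \<Rightarrow> bool" where
  "Ck_on 0 U f = continuous_on U f"
| "Ck_on (Suc m) U f = (f differentiable_on U \<and> continuous_on U f \<and> (\<forall>j. Ck_on m U (partial j f)))"

definition smooth_on :: "(real^'n::finite) set \<Rightarrow> (real^'n \<Rightarrow> real) \<Rightarrow> bool" where
  "smooth_on U f = (\<forall>m. Ck_on m U f)"

end

(*
  For a radial function h(|x|) on R^(2p+1), Delta h = h'' + (2p/r) h'. The recursion
  defining tau gives tau_i' = -r tau_(i+1) and tau_i = r^2 tau_(i+2) - (2i+1) tau_(i+1), hence
  (I - Delta) tau_i = (2p - 2i) tau_(i+1); in particular (I - Delta) tau_p = 0 and tau_p(0) <> 0.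
  The iterates (I - Delta)^j g stay radial, and by downward induction on j each of them is a
  combination of tau_(p-k+j+1), ..., tau_p: a particular solution of (I - Delta) h = (that
  combination) is read off from the tau_i, and its coefficient of tau_p is fixed by the value at 0.
  What remains is uniqueness: a radial solution w of (I - Delta) w = 0 with w(0) = 0 vanishes,
  because r^(2p) is an integrating factor of r w'' + 2p w' = r w, which yields the estimates
  |w(r)| <= M r^(2m) / (2m)! for all m.
*)

theory Submission
  imports Defs
begin

section \<open>The functions tau as power series in r^2\<close>

text \<open>tau i r = tau_series i (r^2): the recursion tau_(i+1) = - tau_i' / r becomes
  differentiation in x = r^2, up to the factor -2.\<close>

fun tau_coeff :: "nat \<Rightarrow> nat \<Rightarrow> real" where
  "tau_coeff 0 j = 1 / fact (2 * j)"
| "tau_coeff (Suc i) j = -2 * diffs (tau_coeff i) j"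

definition tau_series :: "nat \<Rightarrow> real \<Rightarrow> real" where
  "tau_series i x = (\<Sum>j. tau_coeff i j * x ^ j)"

lemma abs_tau_coeff_le: "\<bar>tau_coeff i j\<bar> \<le> 2 ^ i / fact j"
proof (induction i arbitrary: j)
  case 0
  have "fact j \<le> (fact (2 * j) :: real)" by (rule fact_mono) auto
  then show ?case by (simp add: frac_le)
next
  case (Suc i)
  have "\<bar>tau_coeff (Suc i) j\<bar> = 2 * real (Suc j) * \<bar>tau_coeff i (Suc j)\<bar>"
    by (simp add: diffs_def abs_mult)
  also have "\<dots> \<le> 2 * real (Suc j) * (2 ^ i / fact (Suc j))"
    using Suc[of "Suc j"] by (intro mult_left_mono) auto
  also have "\<dots> = 2 ^ Suc i / fact j"
    by (simp del: of_nat_Suc)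
  finally show ?case .
qed

lemma summable_tau_coeff: "summable (\<lambda>j. tau_coeff i j * x ^ j)"
proof (rule summable_comparison_test')
  show "summable (\<lambda>j. 2 ^ i * (inverse (fact j) * \<bar>x\<bar> ^ j))"
    by (intro summable_mult summable_exp)
  have "\<bar>tau_coeff i j\<bar> * \<bar>x\<bar> ^ j \<le> 2 ^ i / fact j * \<bar>x\<bar> ^ j" for j
    using abs_tau_coeff_le[of i j] by (intro mult_right_mono) auto
  then show "norm (tau_coeff i j * x ^ j) \<le> 2 ^ i * (inverse (fact j) * \<bar>x\<bar> ^ j)" for j
    by (simp add: abs_mult power_abs divide_inverse mult_ac)
qed

lemma has_real_derivative_tau_series:
  "(tau_series i has_real_derivative - tau_series (Suc i) x / 2) (at x)"
proof -
  have "(tau_series i has_real_derivative (\<Sum>j. diffs (tau_coeff i) j * x ^ j)) (at x)"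
    unfolding tau_series_def by (rule termdiffs_strong_converges_everywhere[OF summable_tau_coeff])
  moreover have "summable (\<lambda>j. diffs (tau_coeff i) j * x ^ j)"
    using summable_mult[OF summable_tau_coeff[of "Suc i" x], of "-1/2"] by (simp add: algebra_simps)
  then have "tau_series (Suc i) x = -2 * (\<Sum>j. diffs (tau_coeff i) j * x ^ j)"
    unfolding tau_series_def tau_coeff.simps mult.assoc by (rule suminf_mult)
  ultimately show ?thesis by simp
qed

lemma tau_coeff_ratio:
  "tau_coeff i j = (real j + 1) * (4 * real j + 4 * real i + 2) * tau_coeff i (Suc j)"
proof (induction i arbitrary: j)
  case 0
  have "fact (2 * Suc j) = (fact (2 * j) :: real) * ((real j + 1) * (4 * real j + 2))"
    by (simp add: fact_Suc algebra_simps)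
  then have "tau_coeff 0 (Suc j) = 1 / (fact (2 * j) * ((real j + 1) * (4 * real j + 2)))"
    by (simp only: tau_coeff.simps)
  then show ?case
    unfolding \<open>tau_coeff 0 (Suc j) = _\<close> by simp
next
  case (Suc i)
  have "tau_coeff (Suc i) j = -2 * (real j + 1) * tau_coeff i (Suc j)"
    and "tau_coeff (Suc i) (Suc j) = -2 * (real j + 2) * tau_coeff i (Suc (Suc j))"
    by (simp_all add: diffs_def algebra_simps)
  moreover have "tau_coeff i (Suc j) = (real j + 2) * (4 * real j + 4 * real i + 6) * tau_coeff i (Suc (Suc j))"
    using Suc[of "Suc j"] by (simp add: algebra_simps)
  ultimately show ?case by (simp only:) (simp add: algebra_simps)
qed

lemma tau_series_recurrence:
  "tau_series i x = x * tau_series (i + 2) x - (2 * i + 1) * tau_series (i + 1) x"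
proof -
  define f where "f j = tau_coeff i j * x ^ j + (2 * i + 1) * (tau_coeff (i + 1) j * x ^ j)" for j
  have f_0: "f 0 = 0"
    using tau_coeff_ratio[of i 0] by (simp add: f_def diffs_def algebra_simps)
  have f_Suc: "f (Suc j) = x * (tau_coeff (i + 2) j * x ^ j)" for j
  proof -
    have "tau_coeff (i + 2) j = 4 * (real j + 1) * (real j + 2) * tau_coeff i (Suc (Suc j))"
      and "tau_coeff (i + 1) (Suc j) = -2 * (real j + 2) * tau_coeff i (Suc (Suc j))"
      by (simp_all add: diffs_def numeral_2_eq_2 algebra_simps)
    moreover have "tau_coeff i (Suc j)
        = (real j + 2) * (4 * real j + 4 * real i + 6) * tau_coeff i (Suc (Suc j))"
      using tau_coeff_ratio[of i "Suc j"] by (simp add: algebra_simps)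
    ultimately show ?thesis
      unfolding f_def by (simp only:) (simp add: algebra_simps)
  qed
  have "(\<lambda>j. f (Suc j)) sums (x * tau_series (i + 2) x)"
    unfolding f_Suc tau_series_def by (rule sums_mult[OF summable_sums[OF summable_tau_coeff]])
  then have "f sums (x * tau_series (i + 2) x)"
    by (simp add: sums_Suc_iff f_0)
  moreover have "f sums (tau_series i x + (2 * i + 1) * tau_series (i + 1) x)"
    unfolding f_def tau_series_def by (intro sums_add sums_mult summable_sums summable_tau_coeff)
  ultimately have "x * tau_series (i + 2) x = tau_series i x + (2 * i + 1) * tau_series (i + 1) x"
    by (rule sums_unique2)
  then show ?thesis by simp
qed

lemma tau_coeff_nonzero: "tau_coeff i j \<noteq> 0"
  by (induction i arbitrary: j) (auto simp: diffs_def)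

lemma tau_series_at_0_nonzero: "tau_series i 0 \<noteq> 0"
  using powser_zero[of "tau_coeff i"] tau_coeff_nonzero by (simp add: tau_series_def)

lemma tau_series_square_0: "tau_series 0 (t\<^sup>2) = cosh t"
proof -
  have "(\<lambda>n. if even n then tau_coeff 0 (n div 2) * (t\<^sup>2) ^ (n div 2) else 0) sums tau_series 0 (t\<^sup>2)"
    using sums_if[OF sums_zero summable_sums[OF summable_tau_coeff[of 0 "t\<^sup>2"]]]
    by (simp add: tau_series_def)
  moreover have "(if even n then tau_coeff 0 (n div 2) * (t\<^sup>2) ^ (n div 2) else 0)
      = (if even n then t ^ n /\<^sub>R fact n else 0)" for n
    by (cases "even n") (auto elim!: evenE simp: power_mult[symmetric] divide_inverse mult.commute)
  ultimately have "(\<lambda>n. if even n then t ^ n /\<^sub>R fact n else 0) sums tau_series 0 (t\<^sup>2)"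
    by simp
  then show ?thesis
    by (rule sums_unique2[OF _ cosh_converges])
qed

lemma has_real_derivative_tau_series_square:
  "((\<lambda>t. tau_series i (t\<^sup>2)) has_real_derivative - t * tau_series (Suc i) (t\<^sup>2)) (at t)"
  using DERIV_chain2[OF has_real_derivative_tau_series DERIV_pow[of 2 t]] by (simp add: mult.commute)

lemma tau_eq_tau_series: "tau i t = tau_series i (t\<^sup>2)"
proof (induction i arbitrary: t)
  case 0
  then show ?case by (simp add: tau_series_square_0)
next
  case (Suc i)
  have "tau i = (\<lambda>t. tau_series i (t\<^sup>2))"
    using Suc by blast
  then have deriv_tau: "deriv (tau i) s = - s * tau_series (Suc i) (s\<^sup>2)" for s
    using DERIV_imp_deriv[OF has_real_derivative_tau_series_square] by presburger
  have "isCont (\<lambda>s. tau_series (Suc i) (s\<^sup>2)) 0"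
    using has_real_derivative_tau_series_square DERIV_isCont by blast
  then have "((\<lambda>s. tau_series (Suc i) (s\<^sup>2)) \<longlongrightarrow> tau_series (Suc i) 0) (at 0)"
    by (simp add: isCont_def)
  moreover have "\<forall>\<^sub>F s in at 0. tau_series (Suc i) (s\<^sup>2) = - deriv (tau i) s / s"
    unfolding deriv_tau eventually_at_filter by simp
  ultimately have "((\<lambda>s. - deriv (tau i) s / s) \<longlongrightarrow> tau_series (Suc i) 0) (at 0)"
    by (rule Lim_transform_eventually)
  then show ?case
    using deriv_tau by (auto simp: tendsto_Lim)
qed

declare tau.simps(2) [simp del]

lemma has_real_derivative_tau: "(tau i has_real_derivative - t * tau (Suc i) t) (at t)"
  unfolding tau_eq_tau_series[abs_def] by (rule has_real_derivative_tau_series_square)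

lemma has_real_derivative_tau_deriv:
  "((\<lambda>t. - t * tau (Suc i) t) has_real_derivative - tau (Suc i) t + t\<^sup>2 * tau (i + 2) t) (at t)"
  using DERIV_mult[OF DERIV_minus[OF DERIV_ident] has_real_derivative_tau[of "Suc i" t]]
  by (simp add: power2_eq_square mult_ac)

lemma tau_recurrence: "tau i t = t\<^sup>2 * tau (i + 2) t - (2 * i + 1) * tau (i + 1) t"
  unfolding tau_eq_tau_series by (rule tau_series_recurrence)

lemma tau_at_0_nonzero: "tau i 0 \<noteq> 0"
  by (simp add: tau_eq_tau_series tau_series_at_0_nonzero)

text \<open>With a = n - 1 this says (I - Delta) tau_i = (a - 2 i) tau_(i+1) in radial form.\<close>

lemma tau_radial_equation:
  "t * (- tau (Suc i) t + t\<^sup>2 * tau (i + 2) t) + a * (- t * tau (Suc i) t)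
     = t * (tau i t - (a - 2 * i) * tau (Suc i) t)"
  by (subst tau_recurrence[of i t]) (simp add: algebra_simps)

section \<open>Uniqueness for the radial equation\<close>

lemma abs_le_of_derivative_bound:
  fixes f F f' F' :: "real \<Rightarrow> real"
  assumes "0 \<le> t" "continuous_on {0..t} f" "continuous_on {0..t} F" "f 0 = 0" "F 0 = 0"
    and f': "\<And>u. 0 < u \<Longrightarrow> u < t \<Longrightarrow> (f has_real_derivative f' u) (at u)"
    and F': "\<And>u. 0 < u \<Longrightarrow> u < t \<Longrightarrow> (F has_real_derivative F' u) (at u)"
    and bound: "\<And>u. 0 < u \<Longrightarrow> u < t \<Longrightarrow> \<bar>f' u\<bar> \<le> F' u"
  shows "\<bar>f t\<bar> \<le> F t"
proof -
  have "(\<lambda>u. s * f u - F u) t \<le> (\<lambda>u. s * f u - F u) 0" if "\<bar>s\<bar> = 1" for s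
  proof (rule DERIV_nonpos_imp_decreasing_open[OF \<open>0 \<le> t\<close>])
    fix u assume u: "0 < u" "u < t"
    have "s * f' u \<le> F' u"
      using bound[OF u] that by (auto simp: abs_if split: if_splits)
    then show "\<exists>y. ((\<lambda>u. s * f u - F u) has_real_derivative y) (at u) \<and> y \<le> 0"
      using DERIV_diff[OF DERIV_cmult[where c = s, OF f'[OF u]] F'[OF u]] by auto
  qed (use assms(2,3) in \<open>intro continuous_intros\<close>)
  from this[of 1] this[of "-1"] show ?thesis
    using assms(4,5) by auto
qed

lemma has_real_derivative_power_antiderivative:
  "((\<lambda>u. B * u ^ Suc n / Suc n) has_real_derivative B * u ^ n) (at u)"
  using DERIV_cdivide[OF DERIV_cmult[OF DERIV_pow[of "Suc n" u]], of B "Suc n"]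
  by (simp del: of_nat_Suc)

lemma radial_ode_derivative_bound:
  fixes w w' w'' :: "real \<Rightarrow> real" and a q :: nat
  assumes "a \<ge> 1" "0 < t" "0 \<le> B" "continuous_on {0..t} w'"
    and w'': "\<And>u. 0 < u \<Longrightarrow> u < t \<Longrightarrow> (w' has_real_derivative w'' u) (at u)"
    and ode: "\<And>u. 0 < u \<Longrightarrow> u < t \<Longrightarrow> u * w'' u + a * w' u = u * w u"
    and bound: "\<And>u. 0 < u \<Longrightarrow> u < t \<Longrightarrow> \<bar>w u\<bar> \<le> B * u ^ q"
  shows "\<bar>w' t\<bar> \<le> B * t ^ (q + 1) / (q + 1)"
proof -
  txt \<open>t^a is an integrating factor: (t^a w')' = t^a w.\<close>
  obtain b where a: "a = Suc b"
    using \<open>a \<ge> 1\<close> not0_implies_Suc by fastforce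
  have "\<bar>t ^ a * w' t\<bar> \<le> B * t ^ Suc (a + q) / Suc (a + q)"
  proof (rule abs_le_of_derivative_bound[where f = "\<lambda>u. u ^ a * w' u" and f' = "\<lambda>u. u ^ a * w u"
        and F = "\<lambda>u. B * u ^ Suc (a + q) / Suc (a + q)" and F' = "\<lambda>u. B * u ^ (a + q)"])
    fix u assume u: "0 < u" "u < t"
    have "((\<lambda>u. u ^ a * w' u) has_real_derivative a * u ^ b * w' u + u ^ a * w'' u) (at u)"
      using DERIV_mult[OF DERIV_pow[of a u] w''[OF u]] by (simp add: a mult.commute)
    also have "a * u ^ b * w' u + u ^ a * w'' u = u ^ b * (u * w'' u + a * w' u)"
      by (simp add: a algebra_simps)
    finally show "((\<lambda>u. u ^ a * w' u) has_real_derivative u ^ a * w u) (at u)"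
      unfolding ode[OF u] by (simp add: a mult_ac)
    show "((\<lambda>u. B * u ^ Suc (a + q) / Suc (a + q)) has_real_derivative B * u ^ (a + q)) (at u)"
      by (rule has_real_derivative_power_antiderivative)
    show "\<bar>u ^ a * w u\<bar> \<le> B * u ^ (a + q)"
      using bound[OF u] u by (simp add: abs_mult power_add mult_left_mono mult.left_commute)
  qed (use assms(2,4) a in \<open>auto intro!: continuous_intros\<close>)
  then have "t ^ a * \<bar>w' t\<bar> \<le> t ^ a * (B * t ^ (q + 1) / (a + q + 1))"
    using \<open>0 < t\<close> by (simp add: abs_mult power_add mult_ac)
  then have "\<bar>w' t\<bar> \<le> B * t ^ (q + 1) / (a + q + 1)"
    using \<open>0 < t\<close> by (metis mult_le_cancel_left_pos zero_less_power)
  also have "\<dots> \<le> B * t ^ (q + 1) / (q + 1)"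
    using \<open>0 < t\<close> \<open>0 \<le> B\<close> by (intro divide_left_mono) auto
  finally show ?thesis .
qed

lemma radial_ode_solution_bound:
  fixes w w' w'' :: "real \<Rightarrow> real" and a :: nat
  assumes "a \<ge> 1" "continuous_on {0..R} w" "continuous_on {0..R} w'" "w 0 = 0"
    and w': "\<And>u. 0 < u \<Longrightarrow> u < R \<Longrightarrow> (w has_real_derivative w' u) (at u)"
    and w'': "\<And>u. 0 < u \<Longrightarrow> u < R \<Longrightarrow> (w' has_real_derivative w'' u) (at u)"
    and ode: "\<And>u. 0 < u \<Longrightarrow> u < R \<Longrightarrow> u * w'' u + a * w' u = u * w u"
    and M: "\<And>u. u \<in> {0..R} \<Longrightarrow> \<bar>w u\<bar> \<le> M"
  shows "t \<in> {0..R} \<Longrightarrow> \<bar>w t\<bar> \<le> M * t ^ (2 * m) / fact (2 * m)"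
proof (induction m arbitrary: t)
  case 0
  then show ?case using M by simp
next
  case (Suc m)
  define B where "B = M / fact (2 * m) / (2 * m + 1)"
  have "0 \<le> M" using M[of 0] \<open>t \<in> {0..R}\<close> by auto
  then have "0 \<le> B" by (simp add: B_def)
  have "\<bar>w t\<bar> \<le> B * t ^ Suc (2 * m + 1) / Suc (2 * m + 1)"
  proof (rule abs_le_of_derivative_bound[where f = w and f' = w'
        and F = "\<lambda>u. B * u ^ Suc (2 * m + 1) / Suc (2 * m + 1)" and F' = "\<lambda>u. B * u ^ (2 * m + 1)"])
    fix u assume u: "0 < u" "u < t"
    have "\<bar>w' u\<bar> \<le> M / fact (2 * m) * u ^ (2 * m + 1) / (2 * m + 1)"
    proof (rule radial_ode_derivative_bound[where w = w and w'' = w'', OF \<open>a \<ge> 1\<close> \<open>0 < u\<close>])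
      show "continuous_on {0..u} w'"
        using \<open>t \<in> {0..R}\<close> u by (auto intro: continuous_on_subset[OF assms(3)])
    qed (use \<open>0 \<le> M\<close> Suc.IH \<open>t \<in> {0..R}\<close> u w'' ode in auto)
    then show "\<bar>w' u\<bar> \<le> B * u ^ (2 * m + 1)"
      by (simp add: B_def)
    show "((\<lambda>u. B * u ^ Suc (2 * m + 1) / Suc (2 * m + 1)) has_real_derivative B * u ^ (2 * m + 1)) (at u)"
      by (rule has_real_derivative_power_antiderivative)
  next
    show "continuous_on {0..t} (\<lambda>u. B * u ^ Suc (2 * m + 1) / Suc (2 * m + 1))"
      by (intro continuous_intros) auto
  qed (use \<open>t \<in> {0..R}\<close> \<open>w 0 = 0\<close> w' continuous_on_subset[OF assms(2)] in auto)
  also have "\<dots> = M * t ^ (2 * Suc m) / fact (2 * Suc m)"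
    by (simp add: B_def algebra_simps)
  finally show ?case .
qed

lemma radial_ode_unique:
  fixes w w' w'' :: "real \<Rightarrow> real" and a :: nat
  assumes "a \<ge> 1" "w 0 = 0" "0 \<le> t" "t < \<epsilon>"
    and w': "\<And>u. 0 \<le> u \<Longrightarrow> u < \<epsilon> \<Longrightarrow> (w has_real_derivative w' u) (at u)"
    and w'': "\<And>u. 0 \<le> u \<Longrightarrow> u < \<epsilon> \<Longrightarrow> (w' has_real_derivative w'' u) (at u)"
    and ode: "\<And>u. 0 < u \<Longrightarrow> u < \<epsilon> \<Longrightarrow> u * w'' u + a * w' u = u * w u"
  shows "w t = 0"
proof -
  have "continuous_on {0..t} w" "continuous_on {0..t} w'"
    using \<open>t < \<epsilon>\<close> by (auto intro!: continuous_at_imp_continuous_on DERIV_isCont w' w'')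
  moreover obtain M where M: "\<And>u. u \<in> {0..t} \<Longrightarrow> \<bar>w u\<bar> \<le> M"
    using compact_imp_bounded[OF compact_continuous_image[OF \<open>continuous_on {0..t} w\<close> compact_Icc]]
    unfolding bounded_iff by force
  ultimately have "\<bar>w t\<bar> \<le> M * t ^ (2 * m) / fact (2 * m)" for m
    using \<open>t < \<epsilon>\<close> \<open>0 \<le> t\<close>
    by (intro radial_ode_solution_bound[where w' = w' and w'' = w'', OF \<open>a \<ge> 1\<close>])
      (auto intro: w' w'' ode assms(2))
  also have "M * t ^ (2 * m) / fact (2 * m) \<le> M * t ^ (2 * m) / fact m" for m
    using M[of 0] \<open>0 \<le> t\<close> by (intro divide_left_mono fact_mono) auto
  also have "M * t ^ (2 * m) / fact m = M * (inverse (fact m) * (t\<^sup>2) ^ m)" for m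
    by (simp add: power_mult divide_inverse)
  finally have "\<bar>w t\<bar> \<le> M * (inverse (fact m) * (t\<^sup>2) ^ m)" for m .
  moreover have "(\<lambda>m. M * (inverse (fact m) * (t\<^sup>2) ^ m)) \<longlonglongrightarrow> M * 0"
    by (intro tendsto_mult_left summable_LIMSEQ_zero summable_exp)
  ultimately have "\<bar>w t\<bar> \<le> M * 0"
    by (intro LIMSEQ_le_const) auto
  then show ?thesis by simp
qed

section \<open>Radial solutions of iterated (I - Delta)\<close>

lemma tau_sum_radial_equation:
  "t * (\<Sum>i\<in>S. d i * (- tau (Suc i) t + t\<^sup>2 * tau (i + 2) t)) + a * (\<Sum>i\<in>S. d i * (- t * tau (Suc i) t))
     = t * ((\<Sum>i\<in>S. d i * tau i t) - (\<Sum>i\<in>S. d i * (a - 2 * i) * tau (Suc i) t))"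
proof -
  have "t * (d i * (- tau (Suc i) t + t\<^sup>2 * tau (i + 2) t)) + a * (d i * (- t * tau (Suc i) t))
      = t * (d i * tau i t - d i * (a - 2 * i) * tau (Suc i) t)" for i
    using arg_cong[OF tau_radial_equation[of t i a], of "(*) (d i)"] by (simp add: algebra_simps)
  then show ?thesis
    by (simp add: sum_distrib_left sum_subtractf[symmetric] sum.distrib[symmetric])
qed

lemma sum_shifted_radial_coefficients:
  fixes c d f :: "nat \<Rightarrow> real"
  assumes "m < p" "\<And>i. i < p \<Longrightarrow> d i * (2 * real p - 2 * real i) = c (Suc i)"
  shows "(\<Sum>i = p - m..p. d i * (2 * real p - 2 * real i) * f (Suc i)) = (\<Sum>i = p - m + 1..p. c i * f i)"
proof -
  have "{p - m..p} = insert p {p - m..<p}"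
    using \<open>m < p\<close> by auto
  then have "(\<Sum>i = p - m..p. d i * (2 * real p - 2 * real i) * f (Suc i)) = (\<Sum>i = p - m..<p. c (Suc i) * f (Suc i))"
    using assms(2) by (auto intro!: sum.cong)
  also have "\<dots> = (\<Sum>i = p - m + 1..p. c i * f i)"
    using \<open>m < p\<close> sum.shift_bounds_Suc_ivl[of "\<lambda>i. c i * f i" "p - m" p]
    by (simp add: atLeastLessThanSuc_atLeastAtMost)
  finally show ?thesis .
qed

lemma radial_equation_step:
  fixes h h' h'' :: "real \<Rightarrow> real" and c :: "nat \<Rightarrow> real" and p m :: nat
  assumes "m < p"
    and h': "\<And>t. \<bar>t\<bar> < \<epsilon> \<Longrightarrow> (h has_real_derivative h' t) (at t)"
    and h'': "\<And>t. \<bar>t\<bar> < \<epsilon> \<Longrightarrow> (h' has_real_derivative h'' t) (at t)"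
    and eq: "\<And>t. 0 < t \<Longrightarrow> t < \<epsilon> \<Longrightarrow> h t - h'' t - 2 * real p / t * h' t = (\<Sum>i = p - m + 1..p. c i * tau i t)"
  shows "\<exists>d. \<forall>t. 0 \<le> t \<longrightarrow> t < \<epsilon> \<longrightarrow> h t = (\<Sum>i = p - m..p. d i * tau i t)"
proof -
  define S where "S = {p - m..p}"
  define C where "C = (h 0 - (\<Sum>i = p - m..<p. c (Suc i) / (2 * real p - 2 * real i) * tau i 0)) / tau p 0"
  define d where "d i = (if i < p then c (Suc i) / (2 * real p - 2 * real i) else C)" for i
  have particular: "(\<Sum>i\<in>S. d i * (2 * real p - 2 * real i) * tau (Suc i) t) = (\<Sum>i = p - m + 1..p. c i * tau i t)" for t
    unfolding S_def using \<open>m < p\<close> by (intro sum_shifted_radial_coefficients) (auto simp: d_def)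
  define w where "w t = h t - (\<Sum>i\<in>S. d i * tau i t)" for t
  define w' where "w' t = h' t - (\<Sum>i\<in>S. d i * (- t * tau (Suc i) t))" for t
  define w'' where "w'' t = h'' t - (\<Sum>i\<in>S. d i * (- tau (Suc i) t + t\<^sup>2 * tau (i + 2) t))" for t
  have "w t = 0" if "0 \<le> t" "t < \<epsilon>" for t
  proof (rule radial_ode_unique[of "2 * p" w t \<epsilon> w' w''])
    have "S = insert p {p - m..<p}"
      using \<open>m < p\<close> by (auto simp: S_def)
    then show "w 0 = 0"
      using tau_at_0_nonzero[of p] by (simp add: w_def d_def C_def)
    show "(w has_real_derivative w' u) (at u)" if "0 \<le> u" "u < \<epsilon>" for u
      unfolding w_def[abs_def] w'_def using that
      by (intro DERIV_diff DERIV_sum DERIV_cmult h' has_real_derivative_tau) auto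
    show "(w' has_real_derivative w'' u) (at u)" if "0 \<le> u" "u < \<epsilon>" for u
      unfolding w'_def[abs_def] w''_def using that
      by (intro DERIV_diff DERIV_sum DERIV_cmult h'' has_real_derivative_tau_deriv) auto
    show "u * w'' u + real (2 * p) * w' u = u * w u" if "0 < u" "u < \<epsilon>" for u
      using eq[OF that] tau_sum_radial_equation[where t = u and S = S and d = d and a = "2 * p"]
        particular[of u] that
      by (simp add: w_def w'_def w''_def field_simps)
  qed (use \<open>m < p\<close> that in auto)
  then show ?thesis
    unfolding w_def S_def by auto
qed

lemma radial_equation_iterate_span:
  fixes h h' h'' :: "nat \<Rightarrow> real \<Rightarrow> real" and p k :: nat
  assumes "k \<le> p"
    and h': "\<And>j t. \<bar>t\<bar> < \<epsilon> \<Longrightarrow> (h j has_real_derivative h' j t) (at t)"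
    and h'': "\<And>j t. \<bar>t\<bar> < \<epsilon> \<Longrightarrow> (h' j has_real_derivative h'' j t) (at t)"
    and eq: "\<And>j t. 0 < t \<Longrightarrow> t < \<epsilon> \<Longrightarrow> h j t - h'' j t - 2 * real p / t * h' j t = h (Suc j) t"
    and vanish: "\<And>t. 0 \<le> t \<Longrightarrow> t < \<epsilon> \<Longrightarrow> h k t = 0"
  shows "\<exists>c. \<forall>t. 0 \<le> t \<longrightarrow> t < \<epsilon> \<longrightarrow> h 0 t = (\<Sum>i = p - k + 1..p. c i * tau i t)"
proof -
  have "\<exists>c. \<forall>t. 0 \<le> t \<longrightarrow> t < \<epsilon> \<longrightarrow> h (k - m) t = (\<Sum>i = p - m + 1..p. c i * tau i t)"
    if "m \<le> k" for m
    using that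
  proof (induction m)
    case 0
    then show ?case using vanish by auto
  next
    case (Suc m)
    then obtain c where c: "\<And>t. 0 \<le> t \<Longrightarrow> t < \<epsilon> \<Longrightarrow> h (k - m) t = (\<Sum>i = p - m + 1..p. c i * tau i t)"
      by auto
    have "Suc (k - Suc m) = k - m" "p - Suc m + 1 = p - m"
      using Suc.prems \<open>k \<le> p\<close> by auto
    have "\<exists>d. \<forall>t. 0 \<le> t \<longrightarrow> t < \<epsilon> \<longrightarrow> h (k - Suc m) t = (\<Sum>i = p - m..p. d i * tau i t)"
    proof (rule radial_equation_step[where h' = "h' (k - Suc m)" and h'' = "h'' (k - Suc m)" and c = c])
      show "h (k - Suc m) t - h'' (k - Suc m) t - 2 * real p / t * h' (k - Suc m) t
          = (\<Sum>i = p - m + 1..p. c i * tau i t)" if "0 < t" "t < \<epsilon>" for t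
        using eq[OF that, of "k - Suc m"] c[of t] that \<open>Suc (k - Suc m) = k - m\<close> by simp
    qed (use Suc.prems \<open>k \<le> p\<close> h' h'' in auto)
    then show ?case
      using \<open>p - Suc m + 1 = p - m\<close> by simp
  qed
  from this[of k] show ?thesis by simp
qed

section \<open>Partial derivatives and C^k functions\<close>

lemma eventually_nhds_line_in_open:
  fixes x v :: "'a::real_normed_vector"
  assumes "open U" "x \<in> U"
  shows "\<forall>\<^sub>F s in nhds 0. x + s *\<^sub>R v \<in> U"
proof -
  have "((\<lambda>s::real. x + s *\<^sub>R v) \<longlongrightarrow> x) (nhds 0)"
    by (auto intro!: tendsto_eq_intros filterlim_ident)
  then show ?thesis
    using assms by (rule topological_tendstoD)
qed

lemma partial_cong:
  assumes "open U" "x \<in> U" "\<And>y. y \<in> U \<Longrightarrow> f y = g y"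
  shows "partial j f x = partial j g x"
  unfolding partial_def
  by (rule deriv_cong_ev[OF eventually_mono[OF eventually_nhds_line_in_open[OF assms(1,2), of "axis j 1"]]])
    (auto simp: assms(3))

lemma has_real_derivative_partial:
  fixes f :: "real^'n \<Rightarrow> real"
  assumes "f differentiable (at x)"
  shows "((\<lambda>t. f (x + t *\<^sub>R axis j 1)) has_real_derivative partial j f x) (at 0)"
proof -
  obtain f' where f': "(f has_derivative f') (at x)"
    using assms by (auto simp: differentiable_def)
  have "((\<lambda>t::real. x + t *\<^sub>R axis j 1) has_derivative (\<lambda>t. t *\<^sub>R axis j 1)) (at 0)"
    by (auto intro!: derivative_eq_intros)
  from diff_chain_at[OF this, unfolded add_0_right scale_zero_left, OF f']
  moreover have "f' \<circ> (\<lambda>t. t *\<^sub>R axis j 1) = (*) (f' (axis j 1))"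
    using linear_scale[OF has_derivative_linear[OF f']] by auto
  ultimately have "((\<lambda>t. f (x + t *\<^sub>R axis j 1)) has_real_derivative f' (axis j 1)) (at 0)"
    by (simp add: has_field_derivative_def comp_def)
  moreover from DERIV_imp_deriv[OF this] have "partial j f x = f' (axis j 1)"
    by (simp add: partial_def)
  ultimately show ?thesis by simp
qed

lemma has_real_derivative_along_axis:
  fixes f :: "real^'n \<Rightarrow> real"
  assumes "f differentiable (at (t *\<^sub>R axis j 1))"
  shows "((\<lambda>s. f (s *\<^sub>R axis j 1)) has_real_derivative partial j f (t *\<^sub>R axis j 1)) (at t)"
proof -
  have "(\<lambda>s. f (t *\<^sub>R axis j 1 + s *\<^sub>R axis j 1)) = (\<lambda>s. f ((s + t) *\<^sub>R axis j 1))"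
    by (simp add: scaleR_left_distrib add.commute)
  with has_real_derivative_partial[OF assms, of j]
  show ?thesis using DERIV_shift[of "\<lambda>s. f (s *\<^sub>R axis j 1)" _ 0 t] by simp
qed

lemma Ck_on_cong:
  fixes f g :: "real^'n \<Rightarrow> real"
  assumes "open U" "\<And>y. y \<in> U \<Longrightarrow> f y = g y" "Ck_on m U f"
  shows "Ck_on m U g"
  using assms(2,3)
proof (induction m arbitrary: f g)
  case 0
  then show ?case using continuous_on_cong by force
next
  case (Suc m)
  have "g differentiable (at x)" if "x \<in> U" for x
  proof -
    have "f differentiable (at x)"
      using Suc.prems \<open>x \<in> U\<close> differentiable_on_eq_differentiable_at[OF assms(1)] by auto
    then obtain f' where "(f has_derivative f') (at x)"
      by (auto simp: differentiable_def)
    then have "(g has_derivative f') (at x)"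
      by (rule has_derivative_transform_within_open[OF _ assms(1) \<open>x \<in> U\<close>]) (use Suc.prems in auto)
    then show ?thesis by (auto simp: differentiable_def)
  qed
  moreover have "Ck_on m U (partial j g)" for j
  proof (rule Suc.IH[of "partial j f"])
    show "partial j f y = partial j g y" if "y \<in> U" for y
      using partial_cong[OF assms(1) that] Suc.prems by blast
  qed (use Suc.prems in simp)
  moreover have "continuous_on U g"
    using Suc.prems continuous_on_cong by force
  ultimately show ?case
    by (simp add: differentiable_on_eq_differentiable_at[OF assms(1)])
qed

lemma partial_linear_combination:
  fixes f g :: "real^'n \<Rightarrow> real"
  assumes "f differentiable (at x)" "g differentiable (at x)"
  shows "partial j (\<lambda>y. a * f y + b * g y) x = a * partial j f x + b * partial j g x"
  unfolding partial_def[of j "\<lambda>y. a * f y + b * g y"]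
  by (intro DERIV_imp_deriv DERIV_add DERIV_cmult has_real_derivative_partial assms)

lemma Ck_on_linear_combination:
  fixes f g :: "real^'n \<Rightarrow> real"
  assumes "open U"
  shows "Ck_on m U f \<Longrightarrow> Ck_on m U g \<Longrightarrow> Ck_on m U (\<lambda>y. a * f y + b * g y)"
proof (induction m arbitrary: f g)
  case 0
  then show ?case by (auto intro!: continuous_intros)
next
  case (Suc m)
  have "Ck_on m U (partial j (\<lambda>y. a * f y + b * g y))" for j
  proof (rule Ck_on_cong[OF assms])
    show "Ck_on m U (\<lambda>y. a * partial j f y + b * partial j g y)"
      using Suc by simp
    fix y assume "y \<in> U"
    then have "f differentiable (at y)" "g differentiable (at y)"
      using Suc.prems differentiable_on_eq_differentiable_at[OF assms] by auto
    then show "a * partial j f y + b * partial j g y = partial j (\<lambda>y. a * f y + b * g y) y"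
      by (simp add: partial_linear_combination)
  qed
  with Suc.prems show ?case
    by (auto intro!: derivative_intros continuous_intros)
qed

lemma Ck_on_zero: "Ck_on m U (\<lambda>y. 0)"
proof -
  have partial_zero: "partial j (\<lambda>y. 0) = (\<lambda>y. 0)" for j
    by (simp add: partial_def fun_eq_iff)
  show ?thesis by (induction m) (auto simp: partial_zero)
qed

lemma Ck_on_sum:
  fixes F :: "'i \<Rightarrow> real^'n \<Rightarrow> real"
  assumes "open U" "finite S" "\<And>i. i \<in> S \<Longrightarrow> Ck_on m U (F i)"
  shows "Ck_on m U (\<lambda>y. \<Sum>i\<in>S. F i y)"
  using assms(2,3)
proof (induction S rule: finite_induct)
  case empty
  then show ?case by (simp add: Ck_on_zero)
next
  case (insert i S)
  then show ?case
    using Ck_on_linear_combination[OF assms(1), of m "F i" "\<lambda>y. \<Sum>i\<in>S. F i y" 1 1] by simp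
qed

lemma Ck_on_id_minus_lap:
  fixes f :: "real^'n \<Rightarrow> real"
  assumes "open U" "Ck_on (Suc (Suc m)) U f"
  shows "Ck_on m U (id_minus_lap f)"
proof -
  have "id_minus_lap f = (\<lambda>y. 1 * f y + (-1) * (\<Sum>j\<in>UNIV. partial j (partial j f) y))"
    by (auto simp: id_minus_lap_def laplacian_def)
  moreover have "Ck_on m U f"
    using assms(2) by (induction m arbitrary: f) auto
  ultimately show ?thesis
    using assms(2)
    by (simp only:) (intro Ck_on_linear_combination[OF assms(1)] Ck_on_sum[OF assms(1)]; simp)
qed

lemma smooth_on_funpow_id_minus_lap:
  fixes g :: "real^'n \<Rightarrow> real"
  assumes "open U" "smooth_on U g"
  shows "smooth_on U ((id_minus_lap ^^ i) g)"
  using assms(2) by (induction i) (auto simp: smooth_on_def Ck_on_id_minus_lap[OF assms(1)])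

section \<open>The Laplacian of a radial function\<close>

lemma has_real_derivative_norm_along_axis:
  fixes x :: "real^'n"
  assumes "x \<noteq> 0"
  shows "((\<lambda>s. norm (x + s *\<^sub>R axis j 1)) has_real_derivative x $ j / norm x) (at 0)"
proof -
  have "((\<lambda>t::real. x + t *\<^sub>R axis j 1) has_derivative (\<lambda>t. t *\<^sub>R axis j 1)) (at 0)"
    by (auto intro!: derivative_eq_intros)
  from diff_chain_at[OF this, unfolded add_0_right scale_zero_left, OF has_derivative_norm[OF assms]]
  moreover have "(\<lambda>h. h \<bullet> sgn x) \<circ> (\<lambda>t. t *\<^sub>R axis j 1) = (*) (x $ j / norm x)"
    by (auto simp: inner_axis' sgn_div_norm divide_inverse mult_ac)
  ultimately show ?thesis
    by (simp add: has_field_derivative_def comp_def)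
qed

lemma partial_radial:
  fixes f :: "real^'n \<Rightarrow> real"
  assumes "open U" "x \<in> U" "x \<noteq> 0" "\<And>y. y \<in> U \<Longrightarrow> f y = h (norm y)"
    and "(h has_real_derivative h') (at (norm x))"
  shows "partial j f x = h' * x $ j / norm x"
proof -
  have "partial j f x = partial j (\<lambda>y. h (norm y)) x"
    using assms(1,2,4) by (rule partial_cong)
  also have "\<dots> = h' * (x $ j / norm x)"
    unfolding partial_def using assms(5)
    by (intro DERIV_imp_deriv DERIV_chain2[OF _ has_real_derivative_norm_along_axis[OF assms(3)]]) simp
  finally show ?thesis by simp
qed

lemma partial_partial_radial:
  fixes f :: "real^'n \<Rightarrow> real"
  assumes "open U" "x \<in> U" "x \<noteq> 0"
    and "\<And>y. y \<in> U \<Longrightarrow> y \<noteq> 0 \<Longrightarrow> f y = h (norm y) * y $ j / norm y"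
    and "(h has_real_derivative h') (at (norm x))"
  shows "partial j f x = h' * (x $ j / norm x)\<^sup>2 + h (norm x) * (1 / norm x - (x $ j)\<^sup>2 / norm x ^ 3)"
proof -
  define r where "r = norm x"
  have "r > 0" using assms(3) by (simp add: r_def)
  have "partial j f x = partial j (\<lambda>y. h (norm y) * y $ j / norm y) x"
    using assms by (intro partial_cong[of "U - {0}"]) auto
  also have "\<dots> = ((h' * (x $ j / r) * x $ j + h r) * r - h r * x $ j * (x $ j / r)) / (r * r)"
    unfolding partial_def
  proof (rule DERIV_imp_deriv)
    have N: "((\<lambda>s. norm (x + s *\<^sub>R axis j 1)) has_real_derivative x $ j / r) (at 0)"
      unfolding r_def by (rule has_real_derivative_norm_along_axis[OF assms(3)])
    have H: "((\<lambda>s. h (norm (x + s *\<^sub>R axis j 1))) has_real_derivative h' * (x $ j / r)) (at 0)"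
      using assms(5) by (intro DERIV_chain2[OF _ N]) simp
    have C: "((\<lambda>s. (x + s *\<^sub>R axis j 1) $ j) has_real_derivative 1) (at 0)"
      by (auto intro!: derivative_eq_intros)
    from DERIV_divide[OF DERIV_mult[OF H C] N] assms(3)
    show "((\<lambda>t. h (norm (x + t *\<^sub>R axis j 1)) * (x + t *\<^sub>R axis j 1) $ j / norm (x + t *\<^sub>R axis j 1))
        has_real_derivative ((h' * (x $ j / r) * x $ j + h r) * r - h r * x $ j * (x $ j / r)) / (r * r)) (at 0)"
      by (simp add: r_def)
  qed
  also have "\<dots> = h' * (x $ j / r)\<^sup>2 + h r * (1 / r - (x $ j)\<^sup>2 / r ^ 3)"
    using \<open>r > 0\<close> by (simp add: field_simps power2_eq_square power3_eq_cube)
  finally show ?thesis by (simp add: r_def)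
qed

lemma laplacian_radial:
  fixes f :: "real^'n \<Rightarrow> real"
  assumes "open U" "x \<in> U" "x \<noteq> 0" "\<And>y. y \<in> U \<Longrightarrow> f y = h (norm y)"
    and "\<And>y. y \<in> U \<Longrightarrow> y \<noteq> 0 \<Longrightarrow> (h has_real_derivative h' (norm y)) (at (norm y))"
    and "(h' has_real_derivative h'') (at (norm x))"
  shows "laplacian f x = h'' + (real CARD('n) - 1) / norm x * h' (norm x)"
proof -
  define r where "r = norm x"
  have "r > 0" using assms(3) by (simp add: r_def)
  have "partial j (partial j f) x = h'' / r\<^sup>2 * (x $ j)\<^sup>2 + h' r / r - h' r / r ^ 3 * (x $ j)\<^sup>2" for j
  proof -
    have "partial j (partial j f) x = h'' * (x $ j / r)\<^sup>2 + h' r * (1 / r - (x $ j)\<^sup>2 / r ^ 3)"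
      unfolding r_def
      using assms by (intro partial_partial_radial[OF assms(1-3) partial_radial]) auto
    then show ?thesis by (simp add: field_simps power2_eq_square)
  qed
  then have "laplacian f x = (\<Sum>j\<in>UNIV. h'' / r\<^sup>2 * (x $ j)\<^sup>2 + h' r / r - h' r / r ^ 3 * (x $ j)\<^sup>2)"
    by (simp add: laplacian_def)
  also have "\<dots> = h'' / r\<^sup>2 * (\<Sum>j\<in>UNIV. (x $ j)\<^sup>2) + CARD('n) * (h' r / r) - h' r / r ^ 3 * (\<Sum>j\<in>UNIV. (x $ j)\<^sup>2)"
    by (simp add: sum.distrib sum_subtractf sum_distrib_left)
  also have "(\<Sum>j\<in>UNIV. (x $ j)\<^sup>2) = r\<^sup>2"
    unfolding r_def power2_norm_eq_inner by (simp add: inner_vec_def power2_eq_square)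
  finally show ?thesis
    using \<open>r > 0\<close> by (simp add: r_def field_simps power2_eq_square power3_eq_cube)
qed

lemma has_real_derivative_along_axis_in_ball:
  fixes f :: "real^'n \<Rightarrow> real"
  assumes "f differentiable_on ball 0 \<epsilon>" "\<bar>t\<bar> < \<epsilon>"
  shows "((\<lambda>s. f (s *\<^sub>R axis j 1)) has_real_derivative partial j f (t *\<^sub>R axis j 1)) (at t)"
  using assms by (intro has_real_derivative_along_axis) (auto simp: differentiable_on_eq_differentiable_at)

definition radial_on :: "'a::real_normed_vector set \<Rightarrow> ('a \<Rightarrow> 'b) \<Rightarrow> bool" where
  "radial_on U f \<longleftrightarrow> (\<forall>x\<in>U. \<forall>y\<in>U. norm x = norm y \<longrightarrow> f x = f y)"

lemma radial_on_ball_eq_along_axis: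
  fixes f :: "real^'n \<Rightarrow> 'b"
  assumes "radial_on (ball 0 \<epsilon>) f" "x \<in> ball 0 \<epsilon>"
  shows "f x = f (norm x *\<^sub>R axis j 1)"
proof -
  have "norm x *\<^sub>R axis j (1::real) \<in> ball 0 \<epsilon>" "norm x = norm (norm x *\<^sub>R axis j (1::real))"
    using assms(2) by simp_all
  then show ?thesis
    using assms unfolding radial_on_def by blast
qed

lemma id_minus_lap_radial:
  fixes f :: "real^'n \<Rightarrow> real"
  assumes "Ck_on 2 (ball 0 \<epsilon>) f" "radial_on (ball 0 \<epsilon>) f" "x \<in> ball 0 \<epsilon>" "x \<noteq> 0"
  shows "id_minus_lap f x = f (norm x *\<^sub>R axis j 1) - partial j (partial j f) (norm x *\<^sub>R axis j 1)
           - (real CARD('n) - 1) / norm x * partial j f (norm x *\<^sub>R axis j 1)"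
proof -
  have "f differentiable_on ball 0 \<epsilon>" "partial j f differentiable_on ball 0 \<epsilon>"
    using assms(1) by (simp_all add: numeral_2_eq_2)
  then have "laplacian f x = partial j (partial j f) (norm x *\<^sub>R axis j 1)
      + (real CARD('n) - 1) / norm x * partial j f (norm x *\<^sub>R axis j 1)"
    using assms(2-4) radial_on_ball_eq_along_axis[OF assms(2)]
    by (intro laplacian_radial[OF open_ball[of 0 \<epsilon>], where h = "\<lambda>t. f (t *\<^sub>R axis j 1)"]
        has_real_derivative_along_axis_in_ball) auto
  then show ?thesis
    using radial_on_ball_eq_along_axis[OF assms(2,3)] by (simp add: id_minus_lap_def)
qed

lemma radial_on_id_minus_lap:
  fixes f :: "real^'n \<Rightarrow> real"
  assumes "Ck_on 2 (ball 0 \<epsilon>) f" "radial_on (ball 0 \<epsilon>) f"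
  shows "radial_on (ball 0 \<epsilon>) (id_minus_lap f)"
  unfolding radial_on_def
proof (intro ballI impI)
  fix x y :: "real^'n" and j :: 'n
  assume xy: "x \<in> ball 0 \<epsilon>" "y \<in> ball 0 \<epsilon>" "norm x = norm y"
  show "id_minus_lap f x = id_minus_lap f y"
  proof (cases "x = 0")
    case False
    with xy have "y \<noteq> 0" by auto
    with False xy show ?thesis
      using id_minus_lap_radial[OF assms, of x j] id_minus_lap_radial[OF assms, of y j] by simp
  qed (use xy in simp)
qed

lemma radial_on_funpow_id_minus_lap:
  fixes g :: "real^'n \<Rightarrow> real"
  assumes "smooth_on (ball 0 \<epsilon>) g" "radial_on (ball 0 \<epsilon>) g"
  shows "radial_on (ball 0 \<epsilon>) ((id_minus_lap ^^ i) g)"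
proof (induction i)
  case (Suc i)
  have "Ck_on 2 (ball 0 \<epsilon>) ((id_minus_lap ^^ i) g)"
    using smooth_on_funpow_id_minus_lap[OF open_ball assms(1)] by (simp add: smooth_on_def)
  with Suc show ?case
    by (simp add: radial_on_id_minus_lap)
qed (simp add: assms(2))

theorem theorem3p8:
  fixes p k :: nat and g :: "real^'n \<Rightarrow> real" and \<epsilon> :: real
  assumes "p \<ge> 1" and "CARD('n) = 2 * p + 1"
    and "1 \<le> k" and "k \<le> p"
    and "\<epsilon> > 0"
    and "smooth_on (ball 0 \<epsilon>) g"
    and "\<exists>G :: real \<Rightarrow> real. \<forall>x \<in> ball 0 \<epsilon>. g x = G (norm x)"
    and "\<forall>x \<in> ball 0 \<epsilon>. (id_minus_lap ^^ k) g x = 0"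
  shows "\<exists>c :: nat \<Rightarrow> real. \<forall>x \<in> ball 0 \<epsilon>.
           g x = (\<Sum>i = p - k + 1..p. c i * tau i (norm x))"
proof -
  fix j :: 'n
  define F where "F i = (id_minus_lap ^^ i) g" for i
  have C2: "Ck_on 2 (ball 0 \<epsilon>) (F i)" for i
    using smooth_on_funpow_id_minus_lap[OF open_ball assms(6)] by (simp add: F_def smooth_on_def)
  then have "F i differentiable_on ball 0 \<epsilon>" "partial j (F i) differentiable_on ball 0 \<epsilon>" for i
    by (simp_all add: numeral_2_eq_2)
  note derivatives = this[THEN has_real_derivative_along_axis_in_ball]
  have radial: "radial_on (ball 0 \<epsilon>) (F i)" for i
    unfolding F_def using assms(7)
    by (intro radial_on_funpow_id_minus_lap[OF assms(6)]) (auto simp: radial_on_def)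
  have "\<exists>c. \<forall>t. 0 \<le> t \<longrightarrow> t < \<epsilon> \<longrightarrow> F 0 (t *\<^sub>R axis j 1) = (\<Sum>i = p - k + 1..p. c i * tau i t)"
  proof (rule radial_equation_iterate_span[OF \<open>k \<le> p\<close> derivatives])
    show "F i (t *\<^sub>R axis j 1) - partial j (partial j (F i)) (t *\<^sub>R axis j 1)
        - 2 * real p / t * partial j (F i) (t *\<^sub>R axis j 1) = F (Suc i) (t *\<^sub>R axis j 1)"
      if "0 < t" "t < \<epsilon>" for i t
      using id_minus_lap_radial[OF C2 radial, of "t *\<^sub>R axis j 1"] that assms(2)
      by (simp add: F_def)
    show "F k (t *\<^sub>R axis j 1) = 0" if "0 \<le> t" "t < \<epsilon>" for t
      using assms(8) that by (simp add: F_def)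
  qed
  then obtain c where c: "\<And>t. 0 \<le> t \<Longrightarrow> t < \<epsilon> \<Longrightarrow> F 0 (t *\<^sub>R axis j 1) = (\<Sum>i = p - k + 1..p. c i * tau i t)"
    by blast
  have "g x = (\<Sum>i = p - k + 1..p. c i * tau i (norm x))" if "x \<in> ball 0 \<epsilon>" for x
    using radial_on_ball_eq_along_axis[OF radial[of 0] that, where j = j] c[of "norm x"] that by (simp add: F_def)
  then show ?thesis by blast
qed

end
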